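(* Let $\Omega\subseteq\mathbb{R}^N$ be open and bounded, and let $\rho$, $\Delta$, $\Theta=\partial\Omega\cup\Delta$, $\eta$, $T$ and $T_n$ be as described in the context. If $f\in C(\overline{\Omega})$, then $Tf$ extends to a function in $C(\overline{\Omega})$ which coincides with $f$ on $\partial\Omega\cup\Delta$, and $T_nf\to f$ uniformly as $n\to\infty$. Further, if $f\in C(\Omega)$ and $\Gamma\subseteq\partial\Omega$ is a closed set such that $\mathrm{supp}(f)\cap\Gamma=\emptyset$, then also $\mathrm{supp}(Tf)\cap\Gamma=\emptyset$.
   Context: $\rho\in C_c^\infty(\mathbb{R}^N)$ satisfies $0\le\rho\le1$, $\rho(x)=0$ iff $|x|\ge1$, $\rho$ is radially symmetric, and $\rho(x)\ge\rho(1/2)$ for all $|x|<1/2$ (where $\rho(1/2)$ denotes the common value of $\rho$ on the sphere $|x|=1/2$). Set $M_\rho:=(\int_{B_1(0)}\rho(y)\,dy)^{-1}$. Let $\Delta\subseteq\overline{\Omega}$ (possibly empty) be such that $\Theta:=\partial\Omega\cup\Delta$ is closed, and let $\eta\in C^\infty(\mathbb{R}^N)$ be non-negative with $\eta^{-1}(\{0\})=\Theta$, all derivatives of $\eta$ vanishing on $\Theta$, and $\eta(x)<\mathrm{dist}(x,\Theta)$ for every $x\in\mathbb{R}^N\setminus\Theta$. For $f\in L^1_{loc}(\Omega)$, $x\in\Omega$ and $n\in\mathbb{N}$ define $Tf(x):=M_\rho\int_{B_1(0)}\rho(z)f(x-\eta(x)z)\,dz$ and $T_nf(x):=M_\rho\int_{B_1(0)}\rho(z)f(x-\tfrac{\eta(x)}{n}z)\,dz$.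 Thus $Tf(x)=f(x)$ if $\eta(x)=0$, and $Tf(x)=\frac{M_\rho}{\eta(x)^N}\int_\Omega\rho\big(\frac{x-y}{\eta(x)}\big)f(y)\,dy$ if $\eta(x)>0$. For $f:\Omega\to\mathbb{R}$, $\mathrm{supp}(f)$ denotes the closure of $\{x\in\Omega:f(x)\neq0\}$. *)

theory Defs
  imports "HOL-Analysis.Analysis"
begin

fun pderivs :: "'a::euclidean_space list \<Rightarrow> ('a \<Rightarrow> real) \<Rightarrow> 'a \<Rightarrow> real" where
  "pderivs [] f = f"
| "pderivs (i # is) f = (\<lambda>x. frechet_derivative (pderivs is f) (at x) i)"

definition smooth_fun :: "('a::euclidean_space \<Rightarrow> real) \<Rightarrow> bool" where
  "smooth_fun f \<longleftrightarrow> (\<forall>is \<in> lists Basis. \<forall>x. pderivs is f differentiable at x)"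

definition M_rho :: "('a::euclidean_space \<Rightarrow> real) \<Rightarrow> real" where
  "M_rho \<rho> = inverse (integral (ball 0 1) \<rho>)"

definition Tsc :: "('a::euclidean_space \<Rightarrow> real) \<Rightarrow> ('a \<Rightarrow> real) \<Rightarrow> real \<Rightarrow> ('a \<Rightarrow> real) \<Rightarrow> 'a \<Rightarrow> real" where
  "Tsc \<rho> \<eta> s f x = M_rho \<rho> * integral (ball 0 1) (\<lambda>z. \<rho> z * f (x - (s * \<eta> x) *\<^sub>R z))"

definition Top :: "('a::euclidean_space \<Rightarrow> real) \<Rightarrow> ('a \<Rightarrow> real) \<Rightarrow> ('a \<Rightarrow> real) \<Rightarrow> 'a \<Rightarrow> real" where
  "Top \<rho> \<eta> f = Tsc \<rho> \<eta> 1 f"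

definition Tn :: "('a::euclidean_space \<Rightarrow> real) \<Rightarrow> ('a \<Rightarrow> real) \<Rightarrow> nat \<Rightarrow> ('a \<Rightarrow> real) \<Rightarrow> 'a \<Rightarrow> real" where
  "Tn \<rho> \<eta> n f = Tsc \<rho> \<eta> (1 / real n) f"

definition supp_on :: "'a::euclidean_space set \<Rightarrow> ('a \<Rightarrow> real) \<Rightarrow> 'a set" where
  "supp_on \<Omega> f = closure {x \<in> \<Omega>. f x \<noteq> 0}"

end

theory Submission
  imports Defs
begin

text \<open>The mollifier of \<open>f\<close> at \<open>x\<close> averages \<open>f\<close> over the ball of radius \<open>\<eta> x\<close> around \<open>x\<close>.
  Because \<open>\<eta> x\<close> is smaller than the distance from \<open>x\<close> to \<open>\<Theta> \<supseteq> \<partial>\<Omega>\<close>, this ball stays inside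
  \<open>\<Omega>\<close>, and it shrinks to a point as \<open>x\<close> approaches \<open>\<Theta>\<close>. Hence uniform continuity of \<open>f\<close> on the
  compact set \<open>closure \<Omega>\<close> together with continuity of \<open>\<eta>\<close> makes \<open>T f\<close> continuous up to the
  boundary with \<open>T f = f\<close> on \<open>\<Theta>\<close>, and forces \<open>T\<^sub>n f \<rightarrow> f\<close> uniformly because the radii
  \<open>\<eta> x / n\<close> tend to \<open>0\<close> uniformly. For the support statement, near a point \<open>p \<in> \<Gamma>\<close> the
  averaging ball around \<open>x\<close> has radius at most \<open>dist x p\<close>, so it stays in the region where
  \<open>f\<close> vanishes.\<close>

lemma smooth_fun_continuous: "smooth_fun f \<Longrightarrow> continuous_on UNIV f"
  unfolding smooth_fun_def
  by (metis continuous_at_imp_continuous_on differentiable_imp_continuous_within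
      lists.Nil pderivs.simps(1))

lemma integrable_on_subset_compact_of_continuous:
  fixes h :: "'a::euclidean_space \<Rightarrow> real"
  assumes "compact K" "continuous_on K h" "S \<subseteq> K" "S \<in> sets lebesgue"
  shows "h integrable_on S"
proof -
  obtain B where B: "\<And>y. y \<in> K \<Longrightarrow> norm (h y) \<le> B"
    using compact_imp_bounded[OF compact_continuous_image[OF assms(2,1)]]
    by (auto simp: bounded_iff)
  have "h absolutely_integrable_on S"
  proof (rule measurable_bounded_by_integrable_imp_absolutely_integrable[where g="\<lambda>_. B"])
    show "h \<in> borel_measurable (lebesgue_on S)"
      by (rule continuous_imp_measurable_on_sets_lebesgue)
        (use continuous_on_subset[OF assms(2,3)] assms(4) in auto)
    show "(\<lambda>_. B) integrable_on S"
      using assms by (intro integrable_on_const bounded_set_imp_lmeasurable)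
        (auto intro: bounded_subset compact_imp_bounded)
  qed (use assms B in auto)
  then show ?thesis
    using absolutely_integrable_on_def by blast
qed

lemma integral_ball_pos_of_continuous:
  fixes h :: "'a::euclidean_space \<Rightarrow> real"
  assumes cont: "continuous_on (cball a r) h" and nonneg: "\<And>x. x \<in> ball a r \<Longrightarrow> 0 \<le> h x"
    and pos: "0 < h a" and "0 < r"
  shows "0 < integral (ball a r) h"
proof -
  have "isCont h a"
    using continuous_on_interior[OF cont] \<open>0 < r\<close> by simp
  then obtain d where d: "0 < d" "\<And>x. dist x a < d \<Longrightarrow> \<bar>h x - h a\<bar> < h a / 2"
    using pos unfolding continuous_at_eps_delta dist_real_def by (meson half_gt_zero)
  define d' where "d' = min d r"
  have int: "h integrable_on ball a \<delta>" if "\<delta> \<le> r" for \<delta>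
    using that by (intro integrable_on_subset_compact_of_continuous[OF _ cont]) auto
  have "0 < d'"
    using d(1) \<open>0 < r\<close> by (simp add: d'_def)
  then have "0 < h a / 2 * integral (ball a d') (\<lambda>_. 1)"
    using lmeasure_integral[OF lmeasurable_ball, of a d'] content_ball_pos[of d' a] pos by simp
  also have "\<dots> = integral (ball a d') (\<lambda>_. h a / 2)"
    by (simp flip: integral_mult_right)
  also have "\<dots> \<le> integral (ball a d') h"
  proof (rule integral_le[OF _ int])
    show "h a / 2 \<le> h x" if "x \<in> ball a d'" for x
      using d(2)[of x] that by (auto simp: d'_def dist_commute abs_if split: if_splits)
  qed (auto simp: d'_def intro: integrable_on_const)
  also have "\<dots> \<le> integral (ball a r) h"
    using int nonneg by (intro integral_subset_le) (auto simp: d'_def)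
  finally show ?thesis .
qed

lemma M_rho_integral_diff_le:
  fixes \<rho> F G :: "'a::euclidean_space \<Rightarrow> real"
  assumes pos: "integral (ball 0 1) \<rho> > 0" and nonneg: "\<And>z. \<rho> z \<ge> 0"
    and int\<rho>: "\<rho> integrable_on ball 0 1"
    and intF: "(\<lambda>z. \<rho> z * F z) integrable_on ball 0 1"
    and intG: "(\<lambda>z. \<rho> z * G z) integrable_on ball 0 1"
    and le: "\<And>z. z \<in> ball 0 1 \<Longrightarrow> \<bar>F z - G z\<bar> \<le> e"
  shows "\<bar>M_rho \<rho> * integral (ball 0 1) (\<lambda>z. \<rho> z * F z)
          - M_rho \<rho> * integral (ball 0 1) (\<lambda>z. \<rho> z * G z)\<bar> \<le> e"
proof -
  let ?I = "integral (ball 0 1) \<rho>"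
  have diff: "(\<lambda>z. \<rho> z * F z - \<rho> z * G z) integrable_on ball 0 1"
    by (rule integrable_diff[OF intF intG])
  have "norm (integral (ball 0 1) (\<lambda>z. \<rho> z * F z - \<rho> z * G z))
      \<le> integral (ball 0 1) (\<lambda>z. e * \<rho> z)"
  proof (rule integral_norm_bound_integral[OF diff])
    show "(\<lambda>z. e * \<rho> z) integrable_on ball 0 1"
      using integrable_on_cmult_left[OF int\<rho>, of e] by simp
    show "norm (\<rho> z * F z - \<rho> z * G z) \<le> e * \<rho> z" if "z \<in> ball 0 1" for z
    proof -
      have "norm (\<rho> z * F z - \<rho> z * G z) = \<rho> z * \<bar>F z - G z\<bar>"
        using nonneg[of z] by (simp add: abs_mult flip: right_diff_distrib)
      then show ?thesis
        using mult_left_mono[OF le[OF that] nonneg[of z]] by (simp add: mult.commute)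
    qed
  qed
  also have "\<dots> = e * ?I"
    by simp
  finally have "\<bar>integral (ball 0 1) (\<lambda>z. \<rho> z * F z) - integral (ball 0 1) (\<lambda>z. \<rho> z * G z)\<bar>
      \<le> e * ?I"
    by (simp add: integral_diff[OF intF intG])
  then show ?thesis
    using pos by (simp add: M_rho_def abs_mult field_simps flip: right_diff_distrib)
qed

lemma mem_if_dist_lt_infdist_frontier:
  fixes S :: "'a::euclidean_space set"
  assumes "x \<in> S" "frontier S \<subseteq> T" "dist x y < infdist x T"
  shows "y \<in> S"
proof (rule ccontr)
  assume "y \<notin> S"
  then obtain p where p: "p \<in> closed_segment x y" "p \<in> frontier S"
    using connected_Int_frontier[of "closed_segment x y" S] assms(1) by auto
  have "infdist x T \<le> dist x p"
    using p(2) assms(2) by (intro infdist_le) auto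
  also have "\<dots> \<le> dist x y"
    using dist_in_closed_segment[OF p(1)] by (simp add: dist_commute)
  finally show False
    using assms(3) by simp
qed

locale boundary_mollifier =
  fixes \<Omega> \<Theta> :: "'a::euclidean_space set" and \<rho> \<eta> :: "'a \<Rightarrow> real"
  assumes open_\<Omega>: "open \<Omega>"
    and frontier_subset: "frontier \<Omega> \<subseteq> \<Theta>"
    and \<rho>_cont: "continuous_on UNIV \<rho>"
    and \<rho>_nonneg: "\<And>x. 0 \<le> \<rho> x"
    and \<rho>_pos_0: "0 < \<rho> 0"
    and \<eta>_cont: "continuous_on UNIV \<eta>"
    and \<eta>_nonneg: "\<And>x. 0 \<le> \<eta> x"
    and \<eta>_zero: "\<And>x. x \<in> \<Theta> \<Longrightarrow> \<eta> x = 0"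
    and \<eta>_lt_infdist: "\<And>x. x \<notin> \<Theta> \<Longrightarrow> \<eta> x < infdist x \<Theta>"
begin

lemma \<eta>_le_dist:
  assumes "p \<in> \<Theta>"
  shows "\<eta> x \<le> dist x p"
proof (cases "x \<in> \<Theta>")
  case True
  then show ?thesis
    using \<eta>_zero by simp
next
  case False
  then show ?thesis
    using \<eta>_lt_infdist[of x] infdist_le[OF assms, of x] by simp
qed

lemma dist_shift_le:
  assumes "0 \<le> s" "s \<le> 1" "norm z \<le> 1"
  shows "dist x (x - (s * \<eta> x) *\<^sub>R z) \<le> \<eta> x"
proof -
  have "s * \<eta> x * norm z \<le> 1 * \<eta> x * 1"
    using assms \<eta>_nonneg[of x] by (intro mult_mono) auto
  then show ?thesis
    using assms \<eta>_nonneg[of x] by (simp add: dist_norm)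
qed

lemma shift_mem:
  assumes "x \<in> \<Omega>" "0 \<le> s" "s \<le> 1" "norm z \<le> 1"
  shows "x - (s * \<eta> x) *\<^sub>R z \<in> \<Omega>"
proof (cases "x \<in> \<Theta>")
  case True
  then show ?thesis
    using assms(1) \<eta>_zero by simp
next
  case False
  then have "dist x (x - (s * \<eta> x) *\<^sub>R z) < infdist x \<Theta>"
    using dist_shift_le[OF assms(2-4)] \<eta>_lt_infdist by (meson order.strict_trans1)
  then show ?thesis
    by (rule mem_if_dist_lt_infdist_frontier[OF assms(1) frontier_subset])
qed

lemma shift_mem_closure:
  assumes "x \<in> closure \<Omega>" "0 \<le> s" "s \<le> 1" "norm z \<le> 1"
  shows "x - (s * \<eta> x) *\<^sub>R z \<in> closure \<Omega>"
proof (cases "x \<in> \<Omega>")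
  case True
  then show ?thesis
    using shift_mem[OF True assms(2-4)] closure_subset by blast
next
  case False
  then have "x \<in> \<Theta>"
    using assms(1) frontier_subset open_\<Omega> by (auto simp: frontier_def interior_open)
  then show ?thesis
    using assms(1) \<eta>_zero by simp
qed

lemma integral_\<rho>_pos: "integral (ball 0 1) \<rho> > 0"
  using \<rho>_nonneg \<rho>_pos_0
  by (intro integral_ball_pos_of_continuous continuous_on_subset[OF \<rho>_cont]) auto

lemma \<rho>_integrable: "\<rho> integrable_on ball 0 1"
  by (rule integrable_on_subset_compact_of_continuous[where K="cball 0 1"])
    (auto intro: continuous_on_subset[OF \<rho>_cont])

lemma Tsc_eq_self:
  assumes "s * \<eta> x = 0"
  shows "Tsc \<rho> \<eta> s f x = f x"
  using integral_\<rho>_pos unfolding Tsc_def M_rho_def assms by (simp add: integral_mult_left)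

lemma integrable_shift:
  assumes "continuous_on (closure \<Omega>) f" "x \<in> closure \<Omega>" "0 \<le> s" "s \<le> 1"
  shows "(\<lambda>z. \<rho> z * f (x - (s * \<eta> x) *\<^sub>R z)) integrable_on ball 0 1"
proof (rule integrable_on_subset_compact_of_continuous[where K="cball 0 1"])
  have "continuous_on (cball 0 1) (\<lambda>z. f (x - (s * \<eta> x) *\<^sub>R z))"
    by (rule continuous_on_compose2[OF assms(1)])
      (auto intro!: continuous_intros shift_mem_closure[OF assms(2-4)])
  then show "continuous_on (cball 0 1) (\<lambda>z. \<rho> z * f (x - (s * \<eta> x) *\<^sub>R z))"
    by (intro continuous_intros continuous_on_subset[OF \<rho>_cont]) auto
qed auto

lemma Tsc_diff_le:
  assumes f: "continuous_on (closure \<Omega>) f"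
    and x: "x \<in> closure \<Omega>" "x' \<in> closure \<Omega>"
    and s: "s \<in> {0..1}" "s' \<in> {0..1}"
    and le: "\<And>z. z \<in> ball 0 1 \<Longrightarrow> \<bar>f (x - (s * \<eta> x) *\<^sub>R z) - f (x' - (s' * \<eta> x') *\<^sub>R z)\<bar> \<le> e"
  shows "\<bar>Tsc \<rho> \<eta> s f x - Tsc \<rho> \<eta> s' f x'\<bar> \<le> e"
  unfolding Tsc_def
  using s by (intro M_rho_integral_diff_le[OF integral_\<rho>_pos \<rho>_nonneg \<rho>_integrable
        integrable_shift[OF f x(1)] integrable_shift[OF f x(2)] le]) auto

lemma Tsc_uniform_modulus:
  assumes "bounded \<Omega>" "continuous_on (closure \<Omega>) f" "0 < e"
  obtains d where "0 < d"
    "\<And>x x' s s'. x \<in> closure \<Omega> \<Longrightarrow> x' \<in> closure \<Omega> \<Longrightarrow> s \<in> {0..1} \<Longrightarrow> s' \<in> {0..1} \<Longrightarrow>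
      dist x x' + \<bar>s * \<eta> x - s' * \<eta> x'\<bar> < d \<Longrightarrow> \<bar>Tsc \<rho> \<eta> s f x - Tsc \<rho> \<eta> s' f x'\<bar> \<le> e"
proof -
  have "uniformly_continuous_on (closure \<Omega>) f"
    using assms by (intro compact_uniformly_continuous) (auto simp: compact_closure)
  then obtain d where d: "0 < d"
    "\<And>a b. a \<in> closure \<Omega> \<Longrightarrow> b \<in> closure \<Omega> \<Longrightarrow> dist a b < d \<Longrightarrow> dist (f a) (f b) < e"
    using \<open>0 < e\<close> unfolding uniformly_continuous_on_def by metis
  show ?thesis
  proof (rule that[OF d(1)])
    fix x x' s s'
    assume x: "x \<in> closure \<Omega>" "x' \<in> closure \<Omega>" and s: "s \<in> {0..1}" "s' \<in> {0..1}"
      and close: "dist x x' + \<bar>s * \<eta> x - s' * \<eta> x'\<bar> < d"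
    show "\<bar>Tsc \<rho> \<eta> s f x - Tsc \<rho> \<eta> s' f x'\<bar> \<le> e"
    proof (rule Tsc_diff_le[OF assms(2) x s])
      fix z :: 'a
      assume z: "z \<in> ball 0 1"
      have "dist (x - (s * \<eta> x) *\<^sub>R z) (x' - (s' * \<eta> x') *\<^sub>R z)
          = norm ((x - x') - (s * \<eta> x - s' * \<eta> x') *\<^sub>R z)"
        by (simp add: dist_norm algebra_simps)
      also have "\<dots> \<le> dist x x' + \<bar>s * \<eta> x - s' * \<eta> x'\<bar> * norm z"
        by (metis dist_norm norm_scaleR norm_triangle_ineq4)
      also have "\<dots> \<le> dist x x' + \<bar>s * \<eta> x - s' * \<eta> x'\<bar>"
        using z by (simp add: mult_left_le)
      finally have "dist (f (x - (s * \<eta> x) *\<^sub>R z)) (f (x' - (s' * \<eta> x') *\<^sub>R z)) < e"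
        using close s z by (intro d(2) shift_mem_closure x) auto
      then show "\<bar>f (x - (s * \<eta> x) *\<^sub>R z) - f (x' - (s' * \<eta> x') *\<^sub>R z)\<bar> \<le> e"
        by (simp add: dist_real_def)
    qed
  qed
qed

lemma continuous_on_Top:
  assumes "bounded \<Omega>" and f: "continuous_on (closure \<Omega>) f"
  shows "continuous_on (closure \<Omega>) (Top \<rho> \<eta> f)"
  unfolding continuous_on_iff
proof (intro ballI allI impI)
  fix x0 and e :: real
  assume x0: "x0 \<in> closure \<Omega>" and "0 < e"
  then obtain d where d: "0 < d"
    "\<And>x x'. x \<in> closure \<Omega> \<Longrightarrow> x' \<in> closure \<Omega> \<Longrightarrow> dist x x' + \<bar>\<eta> x - \<eta> x'\<bar> < d \<Longrightarrow>
      \<bar>Top \<rho> \<eta> f x - Top \<rho> \<eta> f x'\<bar> \<le> e / 2"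
    using Tsc_uniform_modulus[OF assms half_gt_zero, of e] unfolding Top_def
    by (metis atLeastAtMost_iff mult_1 order_refl zero_le_one)
  have "isCont \<eta> x0"
    using \<eta>_cont by (simp add: continuous_on_eq_continuous_at)
  then obtain d' where d': "0 < d'" "\<And>x. dist x x0 < d' \<Longrightarrow> \<bar>\<eta> x - \<eta> x0\<bar> < d / 2"
    using d(1) unfolding continuous_at_eps_delta dist_real_def by (meson half_gt_zero)
  show "\<exists>d>0. \<forall>x\<in>closure \<Omega>. dist x x0 < d \<longrightarrow> dist (Top \<rho> \<eta> f x) (Top \<rho> \<eta> f x0) < e"
  proof (intro exI[of _ "min d' (d / 2)"] conjI ballI impI)
    fix x
    assume "x \<in> closure \<Omega>" "dist x x0 < min d' (d / 2)"
    then have "\<bar>Top \<rho> \<eta> f x - Top \<rho> \<eta> f x0\<bar> \<le> e / 2"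
      using d'(2)[of x] by (intro d(2) x0) auto
    then show "dist (Top \<rho> \<eta> f x) (Top \<rho> \<eta> f x0) < e"
      using \<open>0 < e\<close> by (simp add: dist_real_def)
  qed (use d d' in auto)
qed

lemma uniform_limit_Tn:
  assumes "bounded \<Omega>" and f: "continuous_on (closure \<Omega>) f"
  shows "uniform_limit (closure \<Omega>) (\<lambda>n. Tn \<rho> \<eta> n f) f sequentially"
  unfolding uniform_limit_iff
proof (intro allI impI)
  fix e :: real
  assume "0 < e"
  then obtain d where d: "0 < d"
    "\<And>x s. x \<in> closure \<Omega> \<Longrightarrow> s \<in> {0..1} \<Longrightarrow> \<bar>s * \<eta> x\<bar> < d \<Longrightarrow>
      \<bar>Tsc \<rho> \<eta> s f x - Tsc \<rho> \<eta> 0 f x\<bar> \<le> e / 2"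
    using Tsc_uniform_modulus[OF assms half_gt_zero, of e] by (metis atLeastAtMost_iff
        diff_zero dist_self add_0 mult_zero_left order_refl zero_le_one)
  have "compact (\<eta> ` closure \<Omega>)"
    using assms(1) by (intro compact_continuous_image continuous_on_subset[OF \<eta>_cont])
      (auto simp: compact_closure)
  then obtain B where "\<forall>y \<in> \<eta> ` closure \<Omega>. \<bar>y\<bar> \<le> B"
    using bounded_real compact_imp_bounded by blast
  then have B: "\<And>x. x \<in> closure \<Omega> \<Longrightarrow> \<eta> x \<le> B"
    by (simp add: abs_le_iff)
  obtain N :: nat where N: "B / d < real N"
    using reals_Archimedean2 by blast
  show "\<forall>\<^sub>F n in sequentially. \<forall>x\<in>closure \<Omega>. dist (Tn \<rho> \<eta> n f x) (f x) < e"
    unfolding eventually_sequentially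
  proof (intro exI[of _ "Suc N"] allI impI ballI)
    fix n x
    assume n: "Suc N \<le> n" and x: "x \<in> closure \<Omega>"
    then have n_pos: "0 < real n" and "B / d < real n"
      using N by auto
    then have "\<eta> x / real n < d"
      using B[OF x] d(1) by (simp add: field_simps)
    then have "\<bar>Tsc \<rho> \<eta> (1 / real n) f x - Tsc \<rho> \<eta> 0 f x\<bar> \<le> e / 2"
      using n_pos \<eta>_nonneg[of x] by (intro d(2) x) auto
    then show "dist (Tn \<rho> \<eta> n f x) (f x) < e"
      using \<open>0 < e\<close> Tsc_eq_self[of 0 x f] by (simp add: Tn_def dist_real_def)
  qed
qed

lemma Tsc_eq_0:
  assumes "x \<in> \<Omega>" "s \<in> {0..1}" and vanish: "\<And>y. y \<in> \<Omega> \<Longrightarrow> dist x y \<le> \<eta> x \<Longrightarrow> f y = 0"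
  shows "Tsc \<rho> \<eta> s f x = 0"
proof -
  have "f (x - (s * \<eta> x) *\<^sub>R z) = 0" if "z \<in> ball 0 1" for z
    using assms(1,2) that by (intro vanish shift_mem dist_shift_le) auto
  then have "integral (ball 0 1) (\<lambda>z. \<rho> z * f (x - (s * \<eta> x) *\<^sub>R z)) = integral (ball 0 1) (\<lambda>_::'a. 0::real)"
    by (intro Henstock_Kurzweil_Integration.integral_cong) simp
  then show ?thesis
    by (simp add: Tsc_def)
qed

lemma supp_on_Top_disjoint:
  assumes "\<Gamma> \<subseteq> \<Theta>" "supp_on \<Omega> f \<inter> \<Gamma> = {}"
  shows "supp_on \<Omega> (Top \<rho> \<eta> f) \<inter> \<Gamma> = {}"
proof -
  have "p \<notin> supp_on \<Omega> (Top \<rho> \<eta> f)" if "p \<in> \<Gamma>" for p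
  proof -
    have "p \<notin> closure {y \<in> \<Omega>. f y \<noteq> 0}"
      using assms(2) \<open>p \<in> \<Gamma>\<close> unfolding supp_on_def by blast
    then obtain r where r: "0 < r" "\<And>y. y \<in> \<Omega> \<Longrightarrow> f y \<noteq> 0 \<Longrightarrow> r \<le> dist y p"
      unfolding closure_approachable by (metis (mono_tags, lifting) mem_Collect_eq not_le)
    have "Top \<rho> \<eta> f x = 0" if x: "x \<in> \<Omega>" "dist x p < r / 2" for x
    proof (unfold Top_def, rule Tsc_eq_0[OF x(1)])
      fix y
      assume "y \<in> \<Omega>" "dist x y \<le> \<eta> x"
      moreover have "\<eta> x \<le> dist x p"
        using \<open>p \<in> \<Gamma>\<close> assms(1) by (intro \<eta>_le_dist) auto
      ultimately show "f y = 0"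
        using r(2)[of y] x(2) dist_triangle[of y p x] by (force simp: dist_commute)
    qed auto
    then have "\<forall>x\<in>{x \<in> \<Omega>. Top \<rho> \<eta> f x \<noteq> 0}. \<not> dist x p < r / 2"
      by blast
    then show ?thesis
      unfolding supp_on_def closure_approachable using r(1) by (metis half_gt_zero)
  qed
  then show ?thesis
    by blast
qed

end

theorem proposition2p3:
  fixes \<Omega> \<Delta> :: "'a::euclidean_space set"
    and \<rho> \<eta> :: "'a \<Rightarrow> real"
  assumes \<Omega>_open: "open \<Omega>" and \<Omega>_bdd: "bounded \<Omega>"
    and \<rho>_smooth: "smooth_fun \<rho>"
    and \<rho>_range: "\<And>x. 0 \<le> \<rho> x \<and> \<rho> x \<le> 1"
    and \<rho>_zero: "\<And>x. \<rho> x = 0 \<longleftrightarrow> norm x \<ge> 1"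
    and \<rho>_radial: "\<And>x y. norm x = norm y \<Longrightarrow> \<rho> x = \<rho> y"
    and \<rho>_half: "\<And>x y. norm x < 1/2 \<Longrightarrow> norm y = 1/2 \<Longrightarrow> \<rho> x \<ge> \<rho> y"
    and \<Delta>_sub: "\<Delta> \<subseteq> closure \<Omega>"
    and \<Theta>_closed: "closed (frontier \<Omega> \<union> \<Delta>)"
    and \<eta>_smooth: "smooth_fun \<eta>"
    and \<eta>_nonneg: "\<And>x. \<eta> x \<ge> 0"
    and \<eta>_zeros: "{x. \<eta> x = 0} = frontier \<Omega> \<union> \<Delta>"
    and \<eta>_flat: "\<And>is x. is \<in> lists Basis \<Longrightarrow> x \<in> frontier \<Omega> \<union> \<Delta> \<Longrightarrow> pderivs is \<eta> x = 0"
    and \<eta>_dist: "\<And>x. x \<notin> frontier \<Omega> \<union> \<Delta> \<Longrightarrow> \<eta> x < infdist x (frontier \<Omega> \<union> \<Delta>)"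
  shows
    "(\<forall>f. continuous_on (closure \<Omega>) f \<longrightarrow>
        (\<exists>g. continuous_on (closure \<Omega>) g \<and> (\<forall>x\<in>\<Omega>. g x = Top \<rho> \<eta> f x)
             \<and> (\<forall>x\<in>frontier \<Omega> \<union> \<Delta>. g x = f x))
        \<and> uniform_limit \<Omega> (\<lambda>n. Tn \<rho> \<eta> n f) f sequentially)
     \<and> (\<forall>f \<Gamma>. continuous_on \<Omega> f \<longrightarrow> closed \<Gamma> \<longrightarrow> \<Gamma> \<subseteq> frontier \<Omega> \<longrightarrow>
          supp_on \<Omega> f \<inter> \<Gamma> = {} \<longrightarrow> supp_on \<Omega> (Top \<rho> \<eta> f) \<inter> \<Gamma> = {})"
proof -
  interpret boundary_mollifier \<Omega> "frontier \<Omega> \<union> \<Delta>" \<rho> \<eta>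
  proof
    show "0 < \<rho> 0"
      using \<rho>_range[of 0] \<rho>_zero[of 0] by simp
    show "\<eta> x = 0" if "x \<in> frontier \<Omega> \<union> \<Delta>" for x
      using \<eta>_zeros that by blast
  qed (use \<Omega>_open \<rho>_range \<eta>_nonneg \<eta>_dist smooth_fun_continuous[OF \<rho>_smooth]
      smooth_fun_continuous[OF \<eta>_smooth] in auto)
  have "(\<exists>g. continuous_on (closure \<Omega>) g \<and> (\<forall>x\<in>\<Omega>. g x = Top \<rho> \<eta> f x)
           \<and> (\<forall>x\<in>frontier \<Omega> \<union> \<Delta>. g x = f x))
        \<and> uniform_limit \<Omega> (\<lambda>n. Tn \<rho> \<eta> n f) f sequentially"
    if f: "continuous_on (closure \<Omega>) f" for f
  proof (intro conjI exI)
    show "continuous_on (closure \<Omega>) (Top \<rho> \<eta> f)"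
      by (rule continuous_on_Top[OF \<Omega>_bdd f])
    show "\<forall>x\<in>frontier \<Omega> \<union> \<Delta>. Top \<rho> \<eta> f x = f x"
      by (simp add: Top_def Tsc_eq_self \<eta>_zero)
    show "uniform_limit \<Omega> (\<lambda>n. Tn \<rho> \<eta> n f) f sequentially"
      by (rule uniform_limit_on_subset[OF uniform_limit_Tn[OF \<Omega>_bdd f] closure_subset])
  qed simp
  then show ?thesis
    using supp_on_Top_disjoint by blast
qed

end
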